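(* Let $\{\phi_j\}_{j\in\mathbb Z}$ be the Fourier basis $\phi_j(t)=e^{\mathrm ij\pi t}$, $T=\{t_n\}_{n=1}^N\subseteq[-1,1]$ scattered points with density $h$, and suppose $hM\le1$. Then $$F(h,M,R)\lesssim\sqrt M\sup_{i\notin\{-R,\dots,R-1\}}\{1/w_i\}.$$ Moreover, if the weights satisfy $w_i\gtrsim|i|$ and $R\ge M$, then $$F(h,M,R)\lesssim h\sqrt M\sup_{i\notin\{-R,\dots,R-1\}}\{|i|/w_i\}.$$
   Context: Fourier setting: $D=(-1,1)$, $\nu=1/2$. $h=\sup_{t\in(-1,1)}\min_n|t-t_n|$; Voronoi cells $V_n=\{t\in(-1,1):|t-t_n|\le|t-t_m|\ \forall m\ne n\}$; $\tau_n=\int_{V_n}\nu$. $U_{n,j}=\sqrt{\tau_n}\phi_j(t_n)$, $j\in\mathbb Z$. Positive weights $w_i\ge1$, $i\in\mathbb Z$, $W=\mathrm{diag}(w_i)_{i\in\mathbb Z}$. For $L\in\mathbb N$, $P_L$ is the coordinate projection onto $\{-L,\dots,L-1\}$ and $P_L^\perp=I-P_L$. $F(h,M,R)=\|P_R^\perp W^{-1}U^*UP_M\|_\infty$ ($\ell^\infty$ operator norm). $a\lesssim b$ means $a\le Cb$ with $C$ independent of $h$, $M$, $R$, $N$, $T$. *)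

theory Defs
  imports "HOL-Analysis.Analysis"
begin

definition phi :: "int \<Rightarrow> real \<Rightarrow> complex" where
  "phi j t = exp (\<i> * complex_of_real (real_of_int j * pi * t))"

definition idx :: "nat \<Rightarrow> int set" where
  "idx L = {- int L ..< int L}"

definition density :: "real set \<Rightarrow> real" where
  "density T = (SUP t\<in>{-1<..<1}. Min ((\<lambda>s. \<bar>t - s\<bar>) ` T))"

definition voronoi :: "real set \<Rightarrow> real \<Rightarrow> real set" where
  "voronoi T s = {t \<in> {-1<..<1}. \<forall>s'\<in>T. s' \<noteq> s \<longrightarrow> \<bar>t - s\<bar> \<le> \<bar>t - s'\<bar>}"

text \<open>tau_n = nu(V_n), with nu = Lebesgue measure / 2.\<close>
definition tau :: "real set \<Rightarrow> real \<Rightarrow> real" where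
  "tau T s = measure lborel (voronoi T s) / 2"

definition Umat :: "real set \<Rightarrow> real \<Rightarrow> int \<Rightarrow> complex" where
  "Umat T s j = complex_of_real (sqrt (tau T s)) * phi j s"

definition Pproj :: "nat \<Rightarrow> (int \<Rightarrow> complex) \<Rightarrow> int \<Rightarrow> complex" where
  "Pproj L x = (\<lambda>j. if j \<in> idx L then x j else 0)"

definition Pperp :: "nat \<Rightarrow> (int \<Rightarrow> complex) \<Rightarrow> int \<Rightarrow> complex" where
  "Pperp L x = (\<lambda>j. if j \<in> idx L then 0 else x j)"

definition Winv :: "(int \<Rightarrow> real) \<Rightarrow> (int \<Rightarrow> complex) \<Rightarrow> int \<Rightarrow> complex" where
  "Winv w x = (\<lambda>i. x i / complex_of_real (w i))"

definition Uop :: "real set \<Rightarrow> (int \<Rightarrow> complex) \<Rightarrow> real \<Rightarrow> complex" where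
  "Uop T x = (\<lambda>s. infsum (\<lambda>j. Umat T s j * x j) UNIV)"

definition Ustar :: "real set \<Rightarrow> (real \<Rightarrow> complex) \<Rightarrow> int \<Rightarrow> complex" where
  "Ustar T y = (\<lambda>i. \<Sum>s\<in>T. cnj (Umat T s i) * y s)"

text \<open>F(h,M,R) = l-infinity operator norm of P_R^perp W^-1 U^* U P_M.\<close>
definition Fnorm :: "real set \<Rightarrow> (int \<Rightarrow> real) \<Rightarrow> nat \<Rightarrow> nat \<Rightarrow> real" where
  "Fnorm T w M R =
     (SUP x\<in>{x :: int \<Rightarrow> complex. \<forall>j. cmod (x j) \<le> 1}.
        SUP i. cmod (Pperp R (Winv w (Ustar T (Uop T (Pproj M x)))) i))"

end

theory Submission
  imports Defs
begin

text \<open>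
  Let \<open>p\<close> be the trigonometric polynomial with coefficients \<open>x\<^sub>j\<close>, \<open>-M \<le> j < M\<close>.
  The \<open>i\<close>-th entry of \<open>U\<^sup>* U P\<^sub>M x\<close> is the Voronoi quadrature \<open>\<Sum>\<^sub>n \<tau>\<^sub>n g(t\<^sub>n)\<close> of
  \<open>g = conj(\<phi>\<^sub>i) p\<close>. Each cell has length at most \<open>2h\<close>, so comparing \<open>g(t\<^sub>n)\<close> with \<open>g\<close>
  on its cell bounds the quadrature error by \<open>2h \<integral>|g'|\<close>. By Parseval and
  Cauchy-Schwarz, \<open>\<integral>|p| \<le> 2\<surd>(2M)\<close> and \<open>\<integral>|p'| \<le> 2\<pi>M\<surd>(2M)\<close>; with \<open>hM \<le> 1\<close> this
  bounds every entry by a multiple of \<open>\<surd>M\<close>. For \<open>|i| \<ge> R \<ge> M\<close> the function \<open>g\<close> has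
  no zero frequency, so its integral vanishes and the entry is the quadrature error
  alone, which is a multiple of \<open>h |i| \<surd>M\<close> because all frequencies of \<open>g\<close> are at
  most \<open>2|i|\<close>. Dividing by \<open>w\<^sub>i\<close> gives both estimates.
\<close>

subsection \<open>Trigonometric polynomials\<close>

lemma phi_has_vector_derivative:
  "(phi j has_vector_derivative (\<i> * of_real (real_of_int j * pi)) * phi j t) (at t)"
proof -
  have "((\<lambda>t. \<i> * complex_of_real (real_of_int j * pi * t))
          has_vector_derivative \<i> * of_real (real_of_int j * pi)) (at t)"
    by (auto intro!: derivative_eq_intros)
  from field_vector_diff_chain_at[OF this DERIV_exp]
  show ?thesis unfolding phi_def o_def .
qed

lemma phi_mult: "phi j t * phi k t = phi (j + k) t"
  unfolding phi_def by (simp add: exp_add[symmetric] algebra_simps)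

lemma cnj_phi: "cnj (phi j t) = phi (- j) t"
  unfolding phi_def by (simp add: exp_cnj)

lemma norm_phi [simp]: "norm (phi j t) = 1"
  unfolding phi_def by simp

lemma phi_one_eq_phi_minus_one: "phi j 1 = phi j (- 1)"
proof -
  have "sin (real_of_int j * pi) = 0"
    using sin_zero_iff_int2 by auto
  then show ?thesis
    unfolding phi_def cis_conv_exp[symmetric] by (simp add: complex_eq_iff)
qed

lemma has_integral_phi: "(phi j has_integral (if j = 0 then 2 else 0)) {-1..1}"
proof (cases "j = 0")
  case True
  then have "phi j = (\<lambda>t. 1)" unfolding phi_def by auto
  then show ?thesis
    using True has_integral_const_real[of "1::complex" "-1" 1] by (simp add: scaleR_conv_of_real)
next
  case False
  define a where "a = \<i> * complex_of_real (real_of_int j * pi)"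
  have "a \<noteq> 0" using False by (simp add: a_def)
  have "((\<lambda>t. phi j t / a) has_vector_derivative phi j t) (at t within {-1..1})" for t
  proof -
    have "((\<lambda>t. phi j t / a) has_vector_derivative (a * phi j t) / a) (at t)"
      using phi_has_vector_derivative[of j t] unfolding a_def[symmetric]
      by (intro derivative_eq_intros) auto
    then show ?thesis using \<open>a \<noteq> 0\<close> by (auto intro: has_vector_derivative_at_within)
  qed
  from fundamental_theorem_of_calculus[OF _ this]
  show ?thesis using False phi_one_eq_phi_minus_one[of j] by simp
qed

definition trig_poly :: "int set \<Rightarrow> (int \<Rightarrow> complex) \<Rightarrow> real \<Rightarrow> complex" where
  "trig_poly J c t = (\<Sum>j\<in>J. c j * phi j t)"

definition deriv_coeffs :: "(int \<Rightarrow> complex) \<Rightarrow> int \<Rightarrow> complex" where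
  "deriv_coeffs c j = c j * (\<i> * of_real (real_of_int j * pi))"

lemma has_vector_derivative_trig_poly:
  "(trig_poly J c has_vector_derivative trig_poly J (deriv_coeffs c) t) (at t)"
  unfolding trig_poly_def deriv_coeffs_def
  by (intro has_vector_derivative_sum derivative_eq_intros)
     (auto simp: algebra_simps intro!: phi_has_vector_derivative)

lemma continuous_on_trig_poly: "continuous_on S (trig_poly J c)"
  unfolding trig_poly_def phi_def by (intro continuous_intros)

lemma norm_deriv_coeffs: "norm (deriv_coeffs c j) = norm (c j) * (pi * \<bar>real_of_int j\<bar>)"
  unfolding deriv_coeffs_def by (simp add: norm_mult abs_mult)

lemma integral_trig_poly_eq_0:
  assumes "finite J" "0 \<notin> J"
  shows "integral {-1..1} (trig_poly J c) = 0"
proof -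
  have "(trig_poly J c has_integral (\<Sum>j\<in>J. c j * (if j = 0 then 2 else 0))) {-1..1}"
    unfolding trig_poly_def using assms(1)
    by (intro has_integral_sum has_integral_mult_right has_integral_phi)
  moreover have "(\<Sum>j\<in>J. c j * (if j = 0 then 2 else 0)) = 0"
    using assms(2) by (intro sum.neutral) auto
  ultimately show ?thesis by (simp add: integral_unique)
qed

lemma cnj_phi_mult_trig_poly:
  "cnj (phi i t) * trig_poly J c t = trig_poly ((\<lambda>j. j - i) ` J) (\<lambda>k. c (k + i)) t"
proof -
  have "inj_on (\<lambda>j. j - i) J" by (auto simp: inj_on_def)
  then show ?thesis
    unfolding trig_poly_def sum_distrib_left sum.reindex[OF \<open>inj_on _ J\<close>]
    by (simp add: cnj_phi phi_mult algebra_simps)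
qed

lemma has_integral_norm_trig_poly_squared:
  assumes "finite J"
  shows "((\<lambda>t. (norm (trig_poly J c t))\<^sup>2) has_integral 2 * (\<Sum>j\<in>J. (norm (c j))\<^sup>2)) {-1..1}"
proof -
  have expand: "complex_of_real ((norm (trig_poly J c t))\<^sup>2)
      = (\<Sum>j\<in>J. \<Sum>k\<in>J. (c j * cnj (c k)) * phi (j - k) t)" for t
  proof -
    have "complex_of_real ((norm (trig_poly J c t))\<^sup>2) = trig_poly J c t * cnj (trig_poly J c t)"
      by (metis complex_norm_square)
    also have "\<dots> = (\<Sum>j\<in>J. \<Sum>k\<in>J. (c j * phi j t) * (cnj (c k) * phi (- k) t))"
      unfolding trig_poly_def by (simp add: sum_product cnj_phi)
    also have "\<dots> = (\<Sum>j\<in>J. \<Sum>k\<in>J. (c j * cnj (c k)) * phi (j - k) t)"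
      by (intro sum.cong refl) (simp add: phi_mult algebra_simps)
    finally show ?thesis .
  qed
  have "((\<lambda>t. \<Sum>j\<in>J. \<Sum>k\<in>J. (c j * cnj (c k)) * phi (j - k) t) has_integral
        (\<Sum>j\<in>J. \<Sum>k\<in>J. (c j * cnj (c k)) * (if j - k = 0 then 2 else 0))) {-1..1}"
    using assms by (intro has_integral_sum has_integral_mult_right has_integral_phi)
  also have "(\<Sum>j\<in>J. \<Sum>k\<in>J. (c j * cnj (c k)) * (if j - k = 0 then 2 else 0))
      = (\<Sum>j\<in>J. c j * cnj (c j) * 2)"
    using assms by (intro sum.cong refl) (simp add: if_distrib cong: if_cong)
  also have "\<dots> = complex_of_real (2 * (\<Sum>j\<in>J. (norm (c j))\<^sup>2))"
    by (simp add: complex_norm_square sum_distrib_left mult.commute del: of_real_power)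
  finally have "((\<lambda>t. complex_of_real ((norm (trig_poly J c t))\<^sup>2))
      has_integral complex_of_real (2 * (\<Sum>j\<in>J. (norm (c j))\<^sup>2))) {-1..1}"
    unfolding expand .
  from has_integral_linear[OF this bounded_linear_Re] show ?thesis
    by (simp add: o_def)
qed

lemma integral_norm_trig_poly_le:
  assumes "finite J"
  shows "integral {-1..1} (\<lambda>t. norm (trig_poly J c t)) \<le> 2 * sqrt (\<Sum>j\<in>J. (norm (c j))\<^sup>2)"
proof -
  define S where "S = (\<Sum>j\<in>J. (norm (c j))\<^sup>2)"
  have integrable: "(\<lambda>t. norm (trig_poly J c t)) integrable_on {-1..1}"
    by (intro integrable_continuous_real continuous_on_norm continuous_on_trig_poly)
  show ?thesis
  proof (cases "S = 0")
    case True
    then have "\<forall>j\<in>J. c j = 0" using assms unfolding S_def by (simp add: sum_nonneg_eq_0_iff)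
    then show ?thesis unfolding S_def[symmetric] using True by (simp add: trig_poly_def)
  next
    case False
    define a where "a = sqrt S"
    have "a > 0" "a * a = S"
      using False sum_nonneg[of J "\<lambda>j. (norm (c j))\<^sup>2"] by (auto simp: a_def S_def)
    \<comment> \<open>Cauchy-Schwarz via the AM-GM bound \<open>|p| \<le> |p|\<^sup>2/(2a) + a/2\<close> with \<open>a = \<surd>S\<close>\<close>
    have pointwise: "norm (trig_poly J c t) \<le> (norm (trig_poly J c t))\<^sup>2 / (2 * a) + a / 2" for t
    proof -
      have "0 \<le> (norm (trig_poly J c t) - a)\<^sup>2" by simp
      then show ?thesis using \<open>a > 0\<close> by (simp add: field_simps power2_eq_square)
    qed
    have "((\<lambda>t. (norm (trig_poly J c t))\<^sup>2 / (2 * a) + a / 2)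
        has_integral (2 * S / (2 * a) + 2 * (a / 2))) {-1..1}"
    proof (intro has_integral_add)
      show "((\<lambda>t. (norm (trig_poly J c t))\<^sup>2 / (2 * a)) has_integral 2 * S / (2 * a)) {-1..1}"
        using has_integral_divide[OF has_integral_norm_trig_poly_squared[OF assms, of c], of "2 * a"]
        unfolding S_def by simp
      show "((\<lambda>t::real. a / 2) has_integral 2 * (a / 2)) {-1..1}"
        using has_integral_const_real[of "a / 2" "-1::real" 1] by simp
    qed
    then have "integral {-1..1} (\<lambda>t. norm (trig_poly J c t)) \<le> 2 * S / (2 * a) + 2 * (a / 2)"
      by (rule has_integral_le[OF integrable_integral[OF integrable]]) (use pointwise in auto)
    also have "\<dots> = 2 * a" using \<open>a > 0\<close> \<open>a * a = S\<close> by (simp add: field_simps)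
    finally show ?thesis unfolding a_def S_def .
  qed
qed

lemma integral_norm_trig_poly_deriv_le:
  assumes "finite J" "0 \<le> K" "\<And>j. j \<in> J \<Longrightarrow> \<bar>real_of_int j\<bar> \<le> K"
  shows "integral {-1..1} (\<lambda>t. norm (trig_poly J (deriv_coeffs c) t))
           \<le> 2 * (pi * K) * sqrt (\<Sum>j\<in>J. (norm (c j))\<^sup>2)"
proof -
  have "(\<Sum>j\<in>J. (norm (deriv_coeffs c j))\<^sup>2) \<le> (\<Sum>j\<in>J. (norm (c j))\<^sup>2 * (pi * K)\<^sup>2)"
  proof (intro sum_mono)
    fix j assume "j \<in> J"
    then have "(pi * \<bar>real_of_int j\<bar>)\<^sup>2 \<le> (pi * K)\<^sup>2"
      using assms(3) by (intro power_mono mult_left_mono) auto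
    then show "(norm (deriv_coeffs c j))\<^sup>2 \<le> (norm (c j))\<^sup>2 * (pi * K)\<^sup>2"
      unfolding norm_deriv_coeffs power_mult_distrib by (intro mult_left_mono) auto
  qed
  then have "sqrt (\<Sum>j\<in>J. (norm (deriv_coeffs c j))\<^sup>2)
      \<le> sqrt ((pi * K)\<^sup>2 * (\<Sum>j\<in>J. (norm (c j))\<^sup>2))"
    by (simp add: sum_distrib_left mult.commute)
  also have "\<dots> = pi * K * sqrt (\<Sum>j\<in>J. (norm (c j))\<^sup>2)"
    using assms(2) by (simp add: real_sqrt_mult)
  finally show ?thesis
    using integral_norm_trig_poly_le[OF assms(1), of "deriv_coeffs c"] by linarith
qed

subsection \<open>Voronoi cells and quadrature\<close>

lemma voronoi_subset: "voronoi T s \<subseteq> {-1<..<1}"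
  unfolding voronoi_def by auto

lemma voronoi_in_borel: "voronoi T s \<in> sets borel"
proof -
  have eq: "voronoi T s = {-1<..<1} \<inter> (\<Inter>s'\<in>T - {s}. {t. \<bar>t - s\<bar> \<le> \<bar>t - s'\<bar>})"
    unfolding voronoi_def by auto
  have "closed (\<Inter>s'\<in>T - {s}. {t. \<bar>t - s\<bar> \<le> \<bar>t - s'\<bar>})"
    by (intro closed_INT ballI closed_Collect_le continuous_intros)
  then show ?thesis unfolding eq by (intro sets.Int borel_open borel_closed) auto
qed

lemma voronoi_in_lebesgue: "voronoi T s \<in> sets lebesgue"
  using voronoi_in_borel by (metis sets_completionI_sets sets_lborel)

lemma measure_voronoi_eq_integral:
  "measure lborel (voronoi T s) = integral (voronoi T s) (\<lambda>x. 1::real)"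
proof -
  have "voronoi T s \<in> lmeasurable"
    by (intro bounded_set_imp_lmeasurable voronoi_in_lebesgue bounded_subset[OF _ voronoi_subset])
       auto
  moreover have "measure lborel (voronoi T s) = measure lebesgue (voronoi T s)"
    using voronoi_in_borel by (metis measure_completion sets_lborel)
  ultimately show ?thesis using lmeasure_integral by simp
qed

lemma integrable_on_voronoi:
  fixes f :: "real \<Rightarrow> 'b::euclidean_space"
  assumes "continuous_on {-1..1} f"
  shows "f integrable_on voronoi T s"
proof -
  have "set_integrable lebesgue (voronoi T s) f"
    using absolutely_integrable_continuous_real[OF assms]
    by (rule set_integrable_subset) (use voronoi_in_lebesgue voronoi_subset[of T s] in auto)
  then show ?thesis by (rule set_lebesgue_integral_eq_integral(1))
qed

lemma dist_le_density_voronoi: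
  assumes "finite T" "T \<subseteq> {-1..1}" "s \<in> T" "t \<in> voronoi T s"
  shows "\<bar>t - s\<bar> \<le> density T"
proof -
  have t: "t \<in> {-1<..<1}" "\<forall>s'\<in>T. \<bar>t - s\<bar> \<le> \<bar>t - s'\<bar>"
    using assms(4) unfolding voronoi_def by auto
  have "Min ((\<lambda>s. \<bar>t - s\<bar>) ` T) = \<bar>t - s\<bar>"
    using assms t by (intro Min_eqI) auto
  moreover have "Min ((\<lambda>s'. \<bar>t - s'\<bar>) ` T) \<le> density T"
    unfolding density_def
  proof (rule cSUP_upper[OF t(1)], rule bdd_aboveI2)
    fix u :: real assume "u \<in> {-1<..<1}"
    then have "\<bar>u - s\<bar> \<le> 2" using assms(2,3) by force
    moreover have "Min ((\<lambda>s'. \<bar>u - s'\<bar>) ` T) \<le> \<bar>u - s\<bar>"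
      using assms by (intro Min_le) auto
    ultimately show "Min ((\<lambda>s'. \<bar>u - s'\<bar>) ` T) \<le> 2" by linarith
  qed
  ultimately show ?thesis by simp
qed

lemma voronoi_contains_segment:
  assumes "T \<subseteq> {-1..1}" "s \<in> T" "t \<in> voronoi T s"
  shows "{min t s<..<max t s} \<subseteq> voronoi T s"
proof
  fix u assume u: "u \<in> {min t s<..<max t s}"
  have t: "t \<in> {-1<..<1}" "\<forall>s'\<in>T. s' \<noteq> s \<longrightarrow> \<bar>t - s\<bar> \<le> \<bar>t - s'\<bar>"
    using assms(3) unfolding voronoi_def by auto
  have "-1 \<le> s" "s \<le> 1" using assms by auto
  then have "u \<in> {-1<..<1}" using u t(1) by auto
  moreover have "\<bar>u - s\<bar> \<le> \<bar>u - s'\<bar>" if "s' \<in> T" "s' \<noteq> s" for s'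
  proof -
    have "\<bar>t - s\<bar> \<le> \<bar>t - s'\<bar>" using t(2) that by blast
    then show ?thesis using u by (auto simp: abs_if split: if_splits)
  qed
  ultimately show "u \<in> voronoi T s"
    unfolding voronoi_def by blast
qed

lemma Union_voronoi:
  assumes "finite T" "T \<noteq> {}"
  shows "(\<Union>s\<in>T. voronoi T s) = {-1<..<1}"
proof
  show "{-1<..<1} \<subseteq> (\<Union>s\<in>T. voronoi T s)"
  proof
    fix t :: real assume t: "t \<in> {-1<..<1}"
    have "Min ((\<lambda>s. \<bar>t - s\<bar>) ` T) \<in> (\<lambda>s. \<bar>t - s\<bar>) ` T"
      using assms by (intro Min_in) auto
    then obtain s where "s \<in> T" "\<bar>t - s\<bar> = Min ((\<lambda>s. \<bar>t - s\<bar>) ` T)"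
      by auto
    moreover have "\<forall>s'\<in>T. Min ((\<lambda>s. \<bar>t - s\<bar>) ` T) \<le> \<bar>t - s'\<bar>"
      using assms(1) by simp
    ultimately have "t \<in> voronoi T s"
      using t unfolding voronoi_def by auto
    with \<open>s \<in> T\<close> show "t \<in> (\<Union>s\<in>T. voronoi T s)" by blast
  qed
qed (use voronoi_subset in blast)

lemma sum_integral_voronoi:
  fixes f :: "real \<Rightarrow> 'b::euclidean_space"
  assumes "finite T" "T \<noteq> {}" "continuous_on {-1..1} f"
  shows "(\<Sum>s\<in>T. integral (voronoi T s) f) = integral {-1..1} f"
proof -
  have boundaries: "voronoi T s \<inter> voronoi T s' \<subseteq> {(s + s') / 2}"
    if "s \<in> T" "s' \<in> T" "s \<noteq> s'" for s s'
  proof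
    fix t assume "t \<in> voronoi T s \<inter> voronoi T s'"
    then have "\<bar>t - s\<bar> = \<bar>t - s'\<bar>"
      using that unfolding voronoi_def by force
    then show "t \<in> {(s + s') / 2}" using that(3) by (auto simp: abs_if split: if_splits)
  qed
  have "(f has_integral (\<Sum>s\<in>T. integral (voronoi T s) f)) (\<Union>s\<in>T. voronoi T s)"
  proof (rule has_integral_UN[OF assms(1)])
    show "pairwise (\<lambda>s s'. negligible (voronoi T s \<inter> voronoi T s')) T"
      unfolding pairwise_def by (metis negligible_subset negligible_sing boundaries)
  qed (use integrable_on_voronoi[OF assms(3)] in blast)
  then show ?thesis
    unfolding Union_voronoi[OF assms(1,2)] by (metis has_integral_Icc_iff_Ioo integral_unique)
qed

lemma density_nonneg:
  assumes "finite T" "T \<noteq> {}" "T \<subseteq> {-1..1}"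
  shows "0 \<le> density T"
proof -
  obtain s where "s \<in> T" "0 \<in> voronoi T s"
    using Union_voronoi[OF assms(1,2)] by (metis UN_iff greaterThanLessThan_iff neg_less_0_iff_less zero_less_one)
  from dist_le_density_voronoi[OF assms(1,3) this] show ?thesis by linarith
qed

lemma measure_voronoi_le:
  assumes "finite T" "T \<noteq> {}" "T \<subseteq> {-1..1}" "s \<in> T"
  shows "measure lborel (voronoi T s) \<le> 2 * density T"
proof -
  define h where "h = density T"
  have "voronoi T s \<subseteq> {s - h..s + h}"
    using dist_le_density_voronoi[OF assms(1,3,4)] unfolding h_def by (force simp: abs_le_iff)
  then have "integral (voronoi T s) (\<lambda>x. 1::real) \<le> integral {s - h..s + h} (\<lambda>x. 1::real)"
    by (intro integral_subset_le integrable_on_voronoi) auto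
  then show ?thesis
    using density_nonneg[OF assms(1-3)] measure_voronoi_eq_integral[of T s]
    unfolding h_def by simp
qed

lemma norm_diff_le_integral_voronoi:
  fixes g g' :: "real \<Rightarrow> complex"
  assumes "T \<subseteq> {-1..1}" "s \<in> T" "t \<in> voronoi T s"
    and g': "\<And>t. (g has_vector_derivative g' t) (at t)" "continuous_on UNIV g'"
  shows "norm (g s - g t) \<le> integral (voronoi T s) (\<lambda>u. norm (g' u))"
proof -
  define a b where "a = min t s" and "b = max t s"
  have cont: "continuous_on A (\<lambda>u. norm (g' u))" for A
    using g'(2) by (intro continuous_on_norm) (auto intro: continuous_on_subset)
  have "(g' has_integral (g b - g a)) {a..b}"
    by (rule fundamental_theorem_of_calculus)
       (use g'(1) in \<open>auto simp: a_def b_def intro: has_vector_derivative_at_within\<close>)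
  moreover have "norm (g s - g t) = norm (g b - g a)"
    unfolding a_def b_def by (cases "t \<le> s") (auto simp: norm_minus_commute)
  ultimately have "norm (g s - g t) = norm (integral {a..b} g')"
    by (simp add: integral_unique)
  also have "\<dots> \<le> integral {a..b} (\<lambda>u. norm (g' u))"
    by (intro integral_norm_bound_integral integrable_continuous_real cont
          continuous_on_subset[OF g'(2)]) auto
  also have "\<dots> = integral {a<..<b} (\<lambda>u. norm (g' u))"
    by (rule integral_open_interval_real)
  also have "\<dots> \<le> integral (voronoi T s) (\<lambda>u. norm (g' u))"
    using voronoi_contains_segment[OF assms(1-3)] unfolding a_def[symmetric] b_def[symmetric]
    by (intro integral_subset_le integrable_on_voronoi cont)
       (auto simp: integrable_on_open_interval_real integrable_continuous_real cont)
  finally show ?thesis .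
qed

lemma voronoi_cell_quadrature_error:
  fixes g g' :: "real \<Rightarrow> complex"
  assumes T: "finite T" "T \<noteq> {}" "T \<subseteq> {-1..1}" "s \<in> T"
    and g': "\<And>t. (g has_vector_derivative g' t) (at t)" "continuous_on UNIV g'"
  shows "norm (measure lborel (voronoi T s) *\<^sub>R g s - integral (voronoi T s) g)
           \<le> 2 * density T * integral (voronoi T s) (\<lambda>u. norm (g' u))"
proof -
  define V where "V = voronoi T s"
  define K where "K = integral V (\<lambda>u. norm (g' u))"
  define m where "m = measure lborel V"
  have cont_g: "continuous_on A g" for A
    using g'(1) by (meson continuous_at_imp_continuous_on has_vector_derivative_continuous)
  have "K \<ge> 0"
    unfolding K_def V_def
    by (intro integral_nonneg integrable_on_voronoi continuous_on_norm
          continuous_on_subset[OF g'(2)]) auto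
  have one: "(\<lambda>x. 1::real) integrable_on V" unfolding V_def by (rule integrable_on_voronoi) simp
  then have m: "((\<lambda>x. 1::real) has_integral m) V"
    using measure_voronoi_eq_integral[of T s] unfolding m_def V_def by (simp add: has_integral_integral)
  have "((\<lambda>x. g s - g x) has_integral (m *\<^sub>R g s - integral V g)) V"
    using has_integral_scaleR_left[OF m, of "g s"] integrable_on_voronoi[OF cont_g, of T s]
    unfolding V_def by (intro has_integral_diff) (auto simp: has_integral_integral)
  then have "norm (m *\<^sub>R g s - integral V g) = norm (integral V (\<lambda>x. g s - g x))"
    by (simp add: integral_unique)
  also have "\<dots> \<le> integral V (\<lambda>x. 1 * K)"
  proof (rule integral_norm_bound_integral)
    show "(\<lambda>x. g s - g x) integrable_on V"
      unfolding V_def by (intro integrable_on_voronoi continuous_intros cont_g)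
    show "(\<lambda>x. 1 * K) integrable_on V"
      using one by (rule integrable_on_mult_left)
    show "norm (g s - g x) \<le> 1 * K" if "x \<in> V" for x
      using norm_diff_le_integral_voronoi[OF T(3,4) _ g'] that unfolding K_def V_def by simp
  qed
  also have "\<dots> = m * K"
    using integral_unique[OF has_integral_mult_left[OF m, of K]] by simp
  also have "\<dots> \<le> 2 * density T * K"
    using measure_voronoi_le[OF T] \<open>K \<ge> 0\<close> unfolding m_def V_def by (intro mult_right_mono)
  finally show ?thesis unfolding V_def K_def m_def .
qed

lemma voronoi_quadrature_error:
  fixes g g' :: "real \<Rightarrow> complex"
  assumes T: "finite T" "T \<noteq> {}" "T \<subseteq> {-1..1}"
    and g': "\<And>t. (g has_vector_derivative g' t) (at t)" "continuous_on UNIV g'"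
  shows "norm ((\<Sum>s\<in>T. measure lborel (voronoi T s) *\<^sub>R g s) - integral {-1..1} g)
           \<le> 2 * density T * integral {-1..1} (\<lambda>u. norm (g' u))"
proof -
  have cont_g: "continuous_on A g" for A
    using g'(1) by (meson continuous_at_imp_continuous_on has_vector_derivative_continuous)
  have cont_g': "continuous_on A (\<lambda>u. norm (g' u))" for A
    using g'(2) by (intro continuous_on_norm) (auto intro: continuous_on_subset)
  have "norm ((\<Sum>s\<in>T. measure lborel (voronoi T s) *\<^sub>R g s) - integral {-1..1} g)
      = norm (\<Sum>s\<in>T. measure lborel (voronoi T s) *\<^sub>R g s - integral (voronoi T s) g)"
    by (simp add: sum_subtractf sum_integral_voronoi[OF T(1,2) cont_g])
  also have "\<dots> \<le> (\<Sum>s\<in>T. norm (measure lborel (voronoi T s) *\<^sub>R g s - integral (voronoi T s) g))"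
    by (rule norm_sum)
  also have "\<dots> \<le> (\<Sum>s\<in>T. 2 * density T * integral (voronoi T s) (\<lambda>u. norm (g' u)))"
    by (intro sum_mono voronoi_cell_quadrature_error[OF T _ g'])
  also have "\<dots> = 2 * density T * integral {-1..1} (\<lambda>u. norm (g' u))"
    by (simp add: sum_distrib_left[symmetric] sum_integral_voronoi[OF T(1,2) cont_g'])
  finally show ?thesis .
qed

lemma voronoi_sum_norm_le:
  fixes g g' :: "real \<Rightarrow> complex"
  assumes T: "finite T" "T \<noteq> {}" "T \<subseteq> {-1..1}"
    and g': "\<And>t. (g has_vector_derivative g' t) (at t)" "continuous_on UNIV g'"
  shows "(\<Sum>s\<in>T. measure lborel (voronoi T s) * norm (g s))
    \<le> integral {-1..1} (\<lambda>u. norm (g u)) + 2 * density T * integral {-1..1} (\<lambda>u. norm (g' u))"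
proof -
  have cont_g: "continuous_on A g" for A
    using g'(1) by (meson continuous_at_imp_continuous_on has_vector_derivative_continuous)
  have cont_norm_g: "continuous_on A (\<lambda>u. norm (g u))" for A
    by (intro continuous_on_norm cont_g)
  have cont_g': "continuous_on A (\<lambda>u. norm (g' u))" for A
    using g'(2) by (intro continuous_on_norm) (auto intro: continuous_on_subset)
  have "measure lborel (voronoi T s) * norm (g s) \<le> integral (voronoi T s) (\<lambda>u. norm (g u))
      + 2 * density T * integral (voronoi T s) (\<lambda>u. norm (g' u))" if "s \<in> T" for s
  proof -
    have "measure lborel (voronoi T s) * norm (g s) = norm (measure lborel (voronoi T s) *\<^sub>R g s)"
      by simp
    also have "\<dots> \<le> norm (integral (voronoi T s) g)
        + norm (measure lborel (voronoi T s) *\<^sub>R g s - integral (voronoi T s) g)"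
      by (rule norm_triangle_sub)
    also have "\<dots> \<le> integral (voronoi T s) (\<lambda>u. norm (g u))
        + 2 * density T * integral (voronoi T s) (\<lambda>u. norm (g' u))"
      by (intro add_mono integral_norm_bound_integral integrable_on_voronoi cont_g cont_norm_g
          voronoi_cell_quadrature_error[OF T that g']) auto
    finally show ?thesis .
  qed
  then have "(\<Sum>s\<in>T. measure lborel (voronoi T s) * norm (g s))
      \<le> (\<Sum>s\<in>T. integral (voronoi T s) (\<lambda>u. norm (g u))
             + 2 * density T * integral (voronoi T s) (\<lambda>u. norm (g' u)))"
    by (rule sum_mono)
  also have "\<dots> = integral {-1..1} (\<lambda>u. norm (g u))
      + 2 * density T * integral {-1..1} (\<lambda>u. norm (g' u))"
    by (simp add: sum.distrib sum_distrib_left[symmetric] sum_integral_voronoi[OF T(1,2) cont_norm_g]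
        sum_integral_voronoi[OF T(1,2) cont_g'])
  finally show ?thesis .
qed

subsection \<open>The operator \<open>W\<^sup>-\<^sup>1 U\<^sup>* U\<close>\<close>

lemma Ustar_Uop_Pproj:
  "Ustar T (Uop T (Pproj M x)) i
     = (\<Sum>s\<in>T. complex_of_real (tau T s) * (cnj (phi i s) * trig_poly (idx M) x s))"
proof -
  have Uop: "Uop T (Pproj M x) s = complex_of_real (sqrt (tau T s)) * trig_poly (idx M) x s" for s
  proof -
    have "Uop T (Pproj M x) s = infsum (\<lambda>j. Umat T s j * x j) (idx M)"
      unfolding Uop_def by (rule infsum_cong_neutral) (auto simp: Pproj_def)
    then show ?thesis
      by (simp add: Umat_def trig_poly_def sum_distrib_left algebra_simps idx_def)
  qed
  have "sqrt (tau T s) * sqrt (tau T s) = tau T s" for s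
    by (simp add: tau_def)
  then have "complex_of_real (sqrt (tau T s)) * complex_of_real (sqrt (tau T s))
      = complex_of_real (tau T s)" for s
    by (metis of_real_mult)
  then show ?thesis
    unfolding Ustar_def Uop Umat_def by (intro sum.cong refl) (simp add: algebra_simps)
qed

lemma sum_norm_squared_idx_le:
  assumes "\<forall>j. cmod (x j) \<le> 1"
  shows "(\<Sum>j\<in>idx M. (norm (x j))\<^sup>2) \<le> 2 * real M"
proof -
  have "(\<Sum>j\<in>idx M. (norm (x j))\<^sup>2) \<le> (\<Sum>j\<in>idx M. 1)"
    using assms by (intro sum_mono power_le_one) auto
  then show ?thesis by (simp add: idx_def)
qed

lemma norm_Ustar_Uop_Pproj_le:
  assumes T: "finite T" "T \<noteq> {}" "T \<subseteq> {-1..1}" and hM: "density T * real M \<le> 1"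
    and x: "\<forall>j. cmod (x j) \<le> 1"
  shows "norm (Ustar T (Uop T (Pproj M x)) i) \<le> sqrt 2 * (1 + 2 * pi) * sqrt (real M)"
proof -
  define p where "p = trig_poly (idx M) x"
  define h where "h = density T"
  have "h \<ge> 0" unfolding h_def by (rule density_nonneg[OF T])
  have sqrt_sum: "sqrt (\<Sum>j\<in>idx M. (norm (x j))\<^sup>2) \<le> sqrt (2 * real M)"
    using sum_norm_squared_idx_le[OF x] by simp
  have L1_p: "integral {-1..1} (\<lambda>u. norm (p u)) \<le> 2 * sqrt (2 * real M)"
    using integral_norm_trig_poly_le[of "idx M" x] sqrt_sum unfolding p_def
    by (simp add: idx_def del: real_sqrt_le_iff)
  have "integral {-1..1} (\<lambda>u. norm (trig_poly (idx M) (deriv_coeffs x) u))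
      \<le> 2 * (pi * real M) * sqrt (\<Sum>j\<in>idx M. (norm (x j))\<^sup>2)"
    by (intro integral_norm_trig_poly_deriv_le) (auto simp: idx_def)
  also have "\<dots> \<le> 2 * (pi * real M) * sqrt (2 * real M)"
    using sqrt_sum by (intro mult_left_mono) auto
  finally have L1_dp: "integral {-1..1} (\<lambda>u. norm (trig_poly (idx M) (deriv_coeffs x) u))
      \<le> 2 * (pi * real M) * sqrt (2 * real M)" .
  have "norm (Ustar T (Uop T (Pproj M x)) i)
      \<le> (\<Sum>s\<in>T. norm (complex_of_real (tau T s) * (cnj (phi i s) * p s)))"
    unfolding Ustar_Uop_Pproj p_def by (rule norm_sum)
  also have "\<dots> = (1/2) * (\<Sum>s\<in>T. measure lborel (voronoi T s) * norm (p s))"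
    by (simp add: norm_mult tau_def sum_distrib_left)
  also have "\<dots> \<le> (1/2) * (integral {-1..1} (\<lambda>u. norm (p u))
      + 2 * h * integral {-1..1} (\<lambda>u. norm (trig_poly (idx M) (deriv_coeffs x) u)))"
    unfolding h_def p_def
    by (intro mult_left_mono voronoi_sum_norm_le[OF T has_vector_derivative_trig_poly
          continuous_on_trig_poly]) auto
  also have "\<dots> \<le> (1/2) * (2 * sqrt (2 * real M) + 2 * h * (2 * (pi * real M) * sqrt (2 * real M)))"
    using L1_p L1_dp \<open>h \<ge> 0\<close> by (intro mult_left_mono add_mono) auto
  also have "\<dots> = sqrt (2 * real M) * (1 + 2 * pi * (h * real M))"
    by (simp add: algebra_simps)
  also have "\<dots> \<le> sqrt (2 * real M) * (1 + 2 * pi)"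
    using hM unfolding h_def by (intro mult_left_mono add_left_mono) auto
  finally show ?thesis by (simp add: real_sqrt_mult mult_ac)
qed

lemma norm_Ustar_Uop_Pproj_high_freq_le:
  assumes T: "finite T" "T \<noteq> {}" "T \<subseteq> {-1..1}"
    and x: "\<forall>j. cmod (x j) \<le> 1" and i: "i \<notin> idx R" and "M \<le> R"
  shows "norm (Ustar T (Uop T (Pproj M x)) i)
           \<le> 4 * pi * sqrt 2 * density T * sqrt (real M) * \<bar>real_of_int i\<bar>"
proof -
  define J where "J = (\<lambda>j. j - i) ` idx M"
  define c where "c = (\<lambda>k. x (k + i))"
  define h where "h = density T"
  have "h \<ge> 0" unfolding h_def by (rule density_nonneg[OF T])
  have "finite J" unfolding J_def by (simp add: idx_def)
  have "real M \<le> \<bar>real_of_int i\<bar>" "i \<notin> idx M"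
    using i \<open>M \<le> R\<close> unfolding idx_def by auto
  then have "0 \<notin> J" unfolding J_def by auto
  have freq: "\<bar>real_of_int k\<bar> \<le> 2 * \<bar>real_of_int i\<bar>" if "k \<in> J" for k
    using that \<open>real M \<le> \<bar>real_of_int i\<bar>\<close> unfolding J_def idx_def by auto
  have "(\<Sum>k\<in>J. (norm (c k))\<^sup>2) = (\<Sum>j\<in>idx M. (norm (x j))\<^sup>2)"
    unfolding J_def c_def by (subst sum.reindex) (auto simp: inj_on_def)
  then have sqrt_sum: "sqrt (\<Sum>k\<in>J. (norm (c k))\<^sup>2) \<le> sqrt (2 * real M)"
    using sum_norm_squared_idx_le[OF x] by simp
  \<comment> \<open>\<open>i \<notin> idx M\<close>, so \<open>conj(\<phi>\<^sub>i) p\<close> has zero mean and the sum is a pure quadrature error\<close>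
  have "Ustar T (Uop T (Pproj M x)) i = (1/2) *\<^sub>R
      ((\<Sum>s\<in>T. measure lborel (voronoi T s) *\<^sub>R trig_poly J c s) - integral {-1..1} (trig_poly J c))"
    unfolding Ustar_Uop_Pproj cnj_phi_mult_trig_poly J_def[symmetric] c_def[symmetric]
      integral_trig_poly_eq_0[OF \<open>finite J\<close> \<open>0 \<notin> J\<close>]
    by (simp add: tau_def scaleR_sum_right scaleR_conv_of_real sum_divide_distrib[symmetric])
  then have "norm (Ustar T (Uop T (Pproj M x)) i) = (1/2) *
      norm ((\<Sum>s\<in>T. measure lborel (voronoi T s) *\<^sub>R trig_poly J c s) - integral {-1..1} (trig_poly J c))"
    by simp
  also have "\<dots> \<le> (1/2) * (2 * h * integral {-1..1} (\<lambda>u. norm (trig_poly J (deriv_coeffs c) u)))"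
    unfolding h_def
    by (intro mult_left_mono voronoi_quadrature_error[OF T has_vector_derivative_trig_poly
          continuous_on_trig_poly]) auto
  also have "\<dots> \<le> (1/2) * (2 * h * (2 * (pi * (2 * \<bar>real_of_int i\<bar>)) * sqrt (2 * real M)))"
    using integral_norm_trig_poly_deriv_le[OF \<open>finite J\<close> _ freq, of c] sqrt_sum \<open>h \<ge> 0\<close>
    by (intro mult_left_mono order.trans[OF _ mult_left_mono[OF sqrt_sum]]) auto
  also have "\<dots> = 4 * pi * sqrt 2 * h * sqrt (real M) * \<bar>real_of_int i\<bar>"
    by (simp add: real_sqrt_mult mult_ac)
  finally show ?thesis unfolding h_def .
qed

lemma Fnorm_le:
  assumes w: "\<And>i. 0 < w i" and g: "\<And>i. 0 \<le> g i" and "0 \<le> A"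
    and bdd: "bdd_above ((\<lambda>i. g i / w i) ` (- idx R))"
    and bound: "\<And>x i. \<forall>j. cmod (x j) \<le> 1 \<Longrightarrow> i \<notin> idx R
                  \<Longrightarrow> cmod (Ustar T (Uop T (Pproj M x)) i) \<le> A * g i"
  shows "Fnorm T w M R \<le> A * (SUP i\<in>- idx R. g i / w i)"
proof -
  define B where "B = (SUP i\<in>- idx R. g i / w i)"
  have below_B: "g i / w i \<le> B" if "i \<notin> idx R" for i
    unfolding B_def using that by (intro cSUP_upper[OF _ bdd]) auto
  have "int R \<notin> idx R" unfolding idx_def by auto
  then have "0 \<le> B"
    using below_B g[of "int R"] w[of "int R"] by (meson divide_nonneg_pos order_trans)
  have entry: "cmod (Pperp R (Winv w (Ustar T (Uop T (Pproj M x)))) i) \<le> A * B"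
    if x: "\<forall>j. cmod (x j) \<le> 1" for x i
  proof (cases "i \<in> idx R")
    case True
    then show ?thesis using \<open>0 \<le> A\<close> \<open>0 \<le> B\<close> by (simp add: Pperp_def)
  next
    case False
    have "cmod (Pperp R (Winv w (Ustar T (Uop T (Pproj M x)))) i)
        = cmod (Ustar T (Uop T (Pproj M x)) i) / w i"
      using False w[of i] by (simp add: Pperp_def Winv_def norm_divide)
    also have "\<dots> \<le> A * g i / w i"
      using bound[OF x False] w[of i] by (intro divide_right_mono) auto
    also have "\<dots> = A * (g i / w i)" by simp
    also have "\<dots> \<le> A * B"
      using below_B[OF False] \<open>0 \<le> A\<close> by (rule mult_left_mono)
    finally show ?thesis .
  qed
  show ?thesis
    unfolding Fnorm_def B_def[symmetric]
    by (intro cSUP_least) (auto intro!: entry exI[of _ "\<lambda>_. 0"])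
qed

theorem lemma8p4:
  shows "(\<exists>C::real. \<forall>(T::real set) (w::int \<Rightarrow> real) (M::nat) (R::nat).
            finite T \<and> T \<noteq> {} \<and> T \<subseteq> {-1..1} \<and> (\<forall>i. w i \<ge> 1) \<and>
            density T * real M \<le> 1 \<longrightarrow>
            Fnorm T w M R \<le> C * sqrt (real M) * (SUP i\<in>- idx R. 1 / w i))
       \<and> (\<forall>c>0::real. \<exists>C::real. \<forall>(T::real set) (w::int \<Rightarrow> real) (M::nat) (R::nat).
            finite T \<and> T \<noteq> {} \<and> T \<subseteq> {-1..1} \<and> (\<forall>i. w i \<ge> 1) \<and>
            density T * real M \<le> 1 \<and> (\<forall>i. w i \<ge> c * \<bar>real_of_int i\<bar>) \<and> R \<ge> M \<longrightarrow>
            Fnorm T w M R \<le> C * density T * sqrt (real M) *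
              (SUP i\<in>- idx R. \<bar>real_of_int i\<bar> / w i))"
proof (intro conjI allI impI)
  show "\<exists>C. \<forall>(T::real set) (w::int \<Rightarrow> real) (M::nat) (R::nat).
            finite T \<and> T \<noteq> {} \<and> T \<subseteq> {-1..1} \<and> (\<forall>i. w i \<ge> 1) \<and>
            density T * real M \<le> 1 \<longrightarrow>
            Fnorm T w M R \<le> C * sqrt (real M) * (SUP i\<in>- idx R. 1 / w i)"
  proof (intro exI allI impI)
    fix T :: "real set" and w :: "int \<Rightarrow> real" and M R :: nat
    assume "finite T \<and> T \<noteq> {} \<and> T \<subseteq> {-1..1} \<and> (\<forall>i. w i \<ge> 1) \<and>
      density T * real M \<le> 1"
    then have T: "finite T" "T \<noteq> {}" "T \<subseteq> {-1..1}" and w: "\<And>i. 1 \<le> w i"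
      and hM: "density T * real M \<le> 1" by auto
    have w_pos: "0 < w i" for i using w[of i] by linarith
    have "Fnorm T w M R \<le> sqrt 2 * (1 + 2 * pi) * sqrt (real M)
        * (SUP i\<in>- idx R. (\<lambda>_. 1) i / w i)"
    proof (rule Fnorm_le)
      show "bdd_above ((\<lambda>i. (\<lambda>_. 1) i / w i) ` (- idx R))"
      proof (intro bdd_aboveI2[of _ _ 1])
        show "(\<lambda>_. 1) i / w i \<le> 1" for i using w[of i] by simp
      qed
    qed (use w_pos norm_Ustar_Uop_Pproj_le[OF T hM] in auto)
    then show "Fnorm T w M R \<le> sqrt 2 * (1 + 2 * pi) * sqrt (real M) * (SUP i\<in>- idx R. 1 / w i)"
      by simp
  qed
next
  fix c :: real assume "c > 0"
  show "\<exists>C. \<forall>(T::real set) (w::int \<Rightarrow> real) (M::nat) (R::nat).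
            finite T \<and> T \<noteq> {} \<and> T \<subseteq> {-1..1} \<and> (\<forall>i. w i \<ge> 1) \<and>
            density T * real M \<le> 1 \<and> (\<forall>i. w i \<ge> c * \<bar>real_of_int i\<bar>) \<and> R \<ge> M \<longrightarrow>
            Fnorm T w M R \<le> C * density T * sqrt (real M) * (SUP i\<in>- idx R. \<bar>real_of_int i\<bar> / w i)"
  proof (intro exI allI impI)
    fix T :: "real set" and w :: "int \<Rightarrow> real" and M R :: nat
    assume "finite T \<and> T \<noteq> {} \<and> T \<subseteq> {-1..1} \<and> (\<forall>i. w i \<ge> 1) \<and>
      density T * real M \<le> 1 \<and> (\<forall>i. w i \<ge> c * \<bar>real_of_int i\<bar>) \<and> R \<ge> M"
    then have T: "finite T" "T \<noteq> {}" "T \<subseteq> {-1..1}" and w: "\<And>i. 1 \<le> w i"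
      and wc: "\<And>i. c * \<bar>real_of_int i\<bar> \<le> w i" and "M \<le> R" by auto
    have w_pos: "0 < w i" for i using w[of i] by linarith
    show "Fnorm T w M R \<le> 4 * pi * sqrt 2 * density T * sqrt (real M)
        * (SUP i\<in>- idx R. \<bar>real_of_int i\<bar> / w i)"
    proof (rule Fnorm_le)
      show "bdd_above ((\<lambda>i. \<bar>real_of_int i\<bar> / w i) ` (- idx R))"
      proof (intro bdd_aboveI2[of _ _ "1 / c"])
        fix i
        have "c * \<bar>real_of_int i\<bar> \<le> 1 * w i" using wc[of i] by simp
        then show "\<bar>real_of_int i\<bar> / w i \<le> 1 / c"
          using w_pos[of i] \<open>c > 0\<close> by (simp add: divide_simps mult.commute)
      qed
    qed (use w_pos density_nonneg[OF T] norm_Ustar_Uop_Pproj_high_freq_le[OF T _ _ \<open>M \<le> R\<close>]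
        in auto)
  qed
qed

end
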